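(* Let $G$ be a finite abelian group and let $\rho\ge4$ be an integer. Then $s_\rho(G)\le\frac{2}{\rho+1}|G|$, with equality if and only if $G$ has a subgroup $H$ such that $G/H$ is cyclic of order $\rho+1$. Moreover, for a subset $A\subseteq G$ the following are equivalent: (i) $A$ is a generating set for $G$ with $\operatorname{diam}^+_A(G)\ge\rho$ and $|A|=\frac{2}{\rho+1}|G|$; (ii) $A=H\cup(g+H)$, where $H$ is a subgroup of $G$ such that $G/H$ is cyclic of order $\rho+1$, and $g\in G$ is such that $g+H$ generates $G/H$.
   Context: Groups are written additively. For $A\subseteq G$ let $A_0:=A\cup\{0\}$ and $\langle A\rangle^+_\rho:=\rho A_0=\{a_1+\dots+a_\rho:a_i\in A_0\}$. $\operatorname{diam}^+_A(G):=\min\{\rho\in\mathbb{N}_0:\langle A\rangle^+_\rho=G\}$ ($\min\varnothing=\infty$). With the convention $\max\varnothing=0$: $s_\rho(G):=\max\{|A|: A\subseteq G,\ \rho\le\operatorname{diam}^+_A(G)<\infty\}$. *)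

theory Defs
  imports "HOL-Algebra.Elementary_Groups" "HOL-Library.Extended_Nat"
begin

text \<open>Groups are HOL-Algebra structures (written multiplicatively; the paper writes them
additively). sumset G A r is the r-fold product set of A_0 = A \<union> {1}, i.e.
the paper's r A_0 (with 0 A_0 = {1}).\<close>

fun sumset :: "('a, 'b) monoid_scheme \<Rightarrow> 'a set \<Rightarrow> nat \<Rightarrow> 'a set" where
  "sumset G A 0 = {\<one>\<^bsub>G\<^esub>}"
| "sumset G A (Suc n) = sumset G A n <#>\<^bsub>G\<^esub> (A \<union> {\<one>\<^bsub>G\<^esub>})"

definition diam :: "('a, 'b) monoid_scheme \<Rightarrow> 'a set \<Rightarrow> enat" where
  "diam G A = (if (\<exists>r. sumset G A r = carrier G)
               then enat (LEAST r. sumset G A r = carrier G) else \<infinity>)"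

definition s_rho :: "('a, 'b) monoid_scheme \<Rightarrow> nat \<Rightarrow> nat" where
  "s_rho G r = Max ({card A | A. A \<subseteq> carrier G \<and> enat r \<le> diam G A \<and> diam G A < \<infinity>} \<union> {0})"

end

theory Submission
  imports Defs "HOL-Algebra.Multiplicative_Group"
begin

text \<open>
  The proof follows Hamidoune's isoperimetric (atom) method; groups are written
  multiplicatively. Fix B = A \<union> {1} \<subseteq> G with B \<noteq> G. A fragment is a nonempty X with
  X B \<noteq> G, the connectivity k of B is the least value of |X B| - |X| over fragments, and
  an atom is a smallest fragment attaining k. Two distinct atoms are disjoint, so the atom
  through 1 is a subgroup H with |H B| = |H| + k. Since B generates G it meets a second
  coset of H, whence |B| \<le> 2k, with equality only if B = H \<union> H g.
  If the diameter is at least r, the sumsets of A are proper up to step r - 1, so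
  |B| + (r - 3) k \<le> |(r-2) A_0| \<le> |G| - |B|; together with |B| \<le> 2k this gives
  (r + 1) |A| \<le> 2 |G|, and equality forces A = H \<union> H g with G/H cyclic of order r + 1.
  Conversely such a union has diameter at least r, as its k-fold sumset meets only k + 1
  cosets of H.
\<close>

context group
begin

lemma card_rcoset:
  assumes "X \<subseteq> carrier G" "g \<in> carrier G"
  shows "card (X #> g) = card X"
proof -
  have "X #> g \<in> rcosets X" using assms(2) by (auto simp: RCOSETS_def)
  then show ?thesis using card_rcosets_equal assms(1) by metis
qed

lemma one_set_mult: "B \<subseteq> carrier G \<Longrightarrow> {\<one>} <#> B = B"
  unfolding set_mult_def by force

lemma subset_set_mult: "X \<subseteq> carrier G \<Longrightarrow> \<one> \<in> B \<Longrightarrow> X \<subseteq> X <#> B"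
  unfolding set_mult_def by force

lemma card_le_set_mult:
  assumes "finite (carrier G)" "X \<subseteq> carrier G" "B \<subseteq> carrier G" "\<one> \<in> B"
  shows "card X \<le> card (X <#> B)"
  using card_mono[OF finite_subset[OF set_mult_closed[OF assms(2,3)] assms(1)]]
    subset_set_mult[OF assms(2,4)] .

text \<open>If X B misses some x, then X is disjoint from the translate x B^-1, so |X| + |B| \<le> |G|.\<close>
lemma card_add_le_if_set_mult_proper:
  assumes fin: "finite (carrier G)" and Xc: "X \<subseteq> carrier G" and Bc: "B \<subseteq> carrier G"
    and proper: "X <#> B \<noteq> carrier G"
  shows "card X + card B \<le> card (carrier G)"
proof -
  obtain x where x: "x \<in> carrier G" "x \<notin> X <#> B"
    using proper set_mult_closed[OF Xc Bc] by blast
  define T where "T = (\<lambda>b. x \<otimes> inv b) ` B"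
  have "inj_on (\<lambda>b. x \<otimes> inv b) B"
    using x(1) Bc by (intro inj_onI) (metis inv_inv Units_l_cancel Units_eq inv_closed subsetD)
  then have card_T: "card T = card B" unfolding T_def by (rule card_image)
  have Tc: "T \<subseteq> carrier G" unfolding T_def using x Bc by auto
  have "X \<inter> T = {}"
  proof (rule ccontr)
    assume "X \<inter> T \<noteq> {}"
    then obtain b where b: "b \<in> B" "x \<otimes> inv b \<in> X" unfolding T_def by blast
    then have "(x \<otimes> inv b) \<otimes> b \<in> X <#> B" unfolding set_mult_def by blast
    moreover have "(x \<otimes> inv b) \<otimes> b = x" using x b Bc by (simp add: m_assoc subsetD)
    ultimately show False using x by simp
  qed
  then have "card (X \<union> T) = card X + card B"
    using card_Un_disjoint finite_subset[OF Xc fin] finite_subset[OF Tc fin] card_T by metis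
  moreover have "card (X \<union> T) \<le> card (carrier G)" using Xc Tc by (intro card_mono[OF fin]) auto
  ultimately show ?thesis by simp
qed

lemma coset_disjoint:
  assumes H: "subgroup H G" and g: "g \<in> carrier G" "g \<notin> H"
  shows "H \<inter> (H #> g) = {}"
proof (rule ccontr)
  assume "H \<inter> (H #> g) \<noteq> {}"
  then obtain x where "x \<in> H" "x \<in> H #> g" by blast
  then have "H #> g = H"
    using repr_independence[OF _ g(1) H] subgroup.rcos_const[OF H is_group] by metis
  then show False using rcos_self[OF g(1) H] g(2) by simp
qed

lemma card_coset_pair:
  assumes fin: "finite (carrier G)" and H: "subgroup H G" and g: "g \<in> carrier G" "g \<notin> H"
  shows "card (H \<union> (H #> g)) = 2 * card H"
proof -
  have Hc: "H \<subseteq> carrier G" using subgroup.subset[OF H] .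
  have "finite H" "finite (H #> g)"
    using finite_subset[OF Hc fin] finite_subset[OF r_coset_subset_G[OF Hc g(1)] fin] .
  then show ?thesis
    using card_Un_disjoint coset_disjoint[OF H g] card_rcoset[OF Hc g(1)] by (metis mult_2)
qed

end

context comm_group
begin

lemma set_mult_rcoset:
  assumes "X \<subseteq> carrier G" "B \<subseteq> carrier G" "g \<in> carrier G"
  shows "(X #> g) <#> B = (X <#> B) #> g"
proof -
  have "x \<otimes> g \<otimes> b = x \<otimes> b \<otimes> g" if "x \<in> X" "b \<in> B" for x b
    using that assms by (metis m_assoc m_comm subsetD)
  then show ?thesis
    unfolding r_coset_def set_mult_def by (auto; metis)
qed

definition fragment :: "'a set \<Rightarrow> 'a set \<Rightarrow> bool" where
  "fragment B X \<longleftrightarrow> X \<subseteq> carrier G \<and> X \<noteq> {} \<and> X <#> B \<noteq> carrier G"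

definition connectivity :: "'a set \<Rightarrow> nat" where
  "connectivity B = Min {card (X <#> B) - card X | X. fragment B X}"

definition kfragment :: "'a set \<Rightarrow> 'a set \<Rightarrow> bool" where
  "kfragment B X \<longleftrightarrow> fragment B X \<and> card (X <#> B) = card X + connectivity B"

definition atom :: "'a set \<Rightarrow> 'a set \<Rightarrow> bool" where
  "atom B X \<longleftrightarrow> kfragment B X \<and> (\<forall>Y. kfragment B Y \<longrightarrow> card X \<le> card Y)"

context
  fixes B :: "'a set"
  assumes fin: "finite (carrier G)" and B_carrier: "B \<subseteq> carrier G" and one_B: "\<one> \<in> B"
begin

lemma finite_fragments: "finite {X. fragment B X}"
  by (rule finite_subset[of _ "Pow (carrier G)"]) (use fin in \<open>auto simp: fragment_def\<close>)

lemma connectivity_le: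
  assumes "fragment B X"
  shows "card X + connectivity B \<le> card (X <#> B)"
proof -
  have "finite {card (X <#> B) - card X | X. fragment B X}"
    using finite_fragments by (simp add: setcompr_eq_image)
  then have "connectivity B \<le> card (X <#> B) - card X"
    unfolding connectivity_def using assms by (intro Min_le) auto
  moreover have "card X \<le> card (X <#> B)"
    using card_le_set_mult fin assms B_carrier one_B unfolding fragment_def by blast
  ultimately show ?thesis by linarith
qed

text \<open>A proper B has an atom: the singleton of the identity is a fragment.\<close>
lemma atom_exists:
  assumes "B \<noteq> carrier G"
  shows "\<exists>X. atom B X"
proof -
  have "fragment B {\<one>}"
    using one_set_mult[OF B_carrier] assms unfolding fragment_def by auto
  moreover have "finite {card (X <#> B) - card X | X. fragment B X}"
    using finite_fragments by (simp add: setcompr_eq_image)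
  ultimately have "connectivity B \<in> {card (X <#> B) - card X | X. fragment B X}"
    unfolding connectivity_def by (intro Min_in) auto
  then obtain X where "fragment B X" "connectivity B = card (X <#> B) - card X" by blast
  moreover have "card X \<le> card (X <#> B)"
    using connectivity_le[OF \<open>fragment B X\<close>] by linarith
  ultimately have "kfragment B X" unfolding kfragment_def by auto
  then show ?thesis
    unfolding atom_def using ex_has_least_nat[of "kfragment B" X card] by blast
qed

lemma fragment_rcoset:
  assumes X: "fragment B X" and g: "g \<in> carrier G"
  shows "fragment B (X #> g) \<and> card (X #> g) = card X \<and> card ((X #> g) <#> B) = card (X <#> B)"
proof -
  have Xc: "X \<subseteq> carrier G" "X \<noteq> {}" "X <#> B \<noteq> carrier G"
    using X unfolding fragment_def by auto
  have XBc: "X <#> B \<subseteq> carrier G" using set_mult_closed[OF Xc(1) B_carrier] .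
  have card_XgB: "card ((X #> g) <#> B) = card (X <#> B)"
    using set_mult_rcoset[OF Xc(1) B_carrier g] card_rcoset[OF XBc g] by simp
  have "card (X <#> B) < card (carrier G)"
    using fin XBc Xc(3) by (meson psubsetI psubset_card_mono)
  then have "(X #> g) <#> B \<noteq> carrier G" using card_XgB by auto
  moreover have "X #> g \<subseteq> carrier G" "X #> g \<noteq> {}"
    using r_coset_subset_G[OF Xc(1) g] Xc(2) unfolding r_coset_def by auto
  ultimately show ?thesis
    using card_rcoset[OF Xc(1) g] card_XgB unfolding fragment_def by auto
qed

lemma atom_rcoset: "atom B X \<Longrightarrow> g \<in> carrier G \<Longrightarrow> atom B (X #> g)"
  using fragment_rcoset unfolding atom_def kfragment_def by auto

text \<open>Duality: the inverses of the complement of X B form a fragment Y whose product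
  Y B avoids the inverses of X.\<close>
lemma dual_fragment:
  assumes X: "fragment B X"
  obtains Y where "fragment B Y" "card Y + card (X <#> B) = card (carrier G)"
    "card (Y <#> B) + card X \<le> card (carrier G)"
proof -
  have Xc: "X \<subseteq> carrier G" "X \<noteq> {}" "X <#> B \<noteq> carrier G"
    using X unfolding fragment_def by auto
  have XBc: "X <#> B \<subseteq> carrier G" using set_mult_closed[OF Xc(1) B_carrier] .
  define Y where "Y = m_inv G ` (carrier G - (X <#> B))"
  have Yc: "Y \<subseteq> carrier G" unfolding Y_def by blast
  have inj: "inj_on (m_inv G) S" if "S \<subseteq> carrier G" for S
    using inj_on_subset[OF inv_inj that] .
  have card_Y: "card Y + card (X <#> B) = card (carrier G)"
    unfolding Y_def using card_image[OF inj] card_Diff_subset[OF finite_subset[OF XBc fin] XBc]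
      card_mono[OF fin XBc] by auto
  have YB: "Y <#> B \<subseteq> carrier G - m_inv G ` X"
  proof
    fix w assume "w \<in> Y <#> B"
    then obtain z b where zb: "z \<in> carrier G" "z \<notin> X <#> B" "b \<in> B" "w = inv z \<otimes> b"
      unfolding Y_def set_mult_def by blast
    have b: "b \<in> carrier G" using zb B_carrier by auto
    have "w \<notin> m_inv G ` X"
    proof
      assume "w \<in> m_inv G ` X"
      then obtain x where x: "x \<in> X" "inv z \<otimes> b = inv x" using zb by auto
      have "x \<in> carrier G" using x Xc by auto
      have "(x \<otimes> b) \<otimes> inv z = x \<otimes> (inv z \<otimes> b)"
        using \<open>x \<in> carrier G\<close> zb(1) b by (simp add: m_assoc m_comm[of b "inv z"])
      also have "\<dots> = \<one>" using x(2) \<open>x \<in> carrier G\<close> by simp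
      finally have "inv (inv z) = x \<otimes> b"
        by (rule inv_equality) (use \<open>x \<in> carrier G\<close> zb(1) b in auto)
      then have "z = x \<otimes> b" using zb(1) by simp
      then show False using x(1) zb(2,3) unfolding set_mult_def by blast
    qed
    then show "w \<in> carrier G - m_inv G ` X" using zb b by auto
  qed
  have "card (Y <#> B) \<le> card (carrier G - m_inv G ` X)"
    using YB fin by (intro card_mono) auto
  also have "\<dots> = card (carrier G) - card X"
    using card_Diff_subset[of "m_inv G ` X" "carrier G"] card_image[OF inj[OF Xc(1)]]
      finite_subset[OF Xc(1) fin] Xc(1) by auto
  finally have card_YB: "card (Y <#> B) + card X \<le> card (carrier G)"
    using card_mono[OF fin Xc(1)] by linarith
  obtain x where "x \<in> X" using Xc(2) by auto
  then have "inv x \<in> carrier G - (Y <#> B)" using YB Xc(1) by auto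
  then have "Y <#> B \<noteq> carrier G" by auto
  moreover have "Y \<noteq> {}" unfolding Y_def using XBc Xc(3) by auto
  ultimately have "fragment B Y" using Yc unfolding fragment_def by auto
  then show ?thesis using that card_Y card_YB by blast
qed

text \<open>Applied to an atom, duality shows that an atom and its product fill at most G.\<close>
lemma atom_card_le:
  assumes "atom B X"
  shows "card X + card (X <#> B) \<le> card (carrier G)"
proof -
  have X: "fragment B X" "card (X <#> B) = card X + connectivity B"
    using assms unfolding atom_def kfragment_def by auto
  obtain Y where Y: "fragment B Y" "card Y + card (X <#> B) = card (carrier G)"
    "card (Y <#> B) + card X \<le> card (carrier G)"
    using dual_fragment[OF X(1)] .
  have "card Y + connectivity B \<le> card (Y <#> B)" using connectivity_le[OF Y(1)] .
  then have "kfragment B Y" using X(2) Y unfolding kfragment_def by auto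
  then have "card X \<le> card Y" using assms unfolding atom_def by auto
  then show ?thesis using Y(2) by linarith
qed

lemma atom_eq_if_meet:
  assumes X: "atom B X" and Y: "atom B Y" and meet: "X \<inter> Y \<noteq> {}"
  shows "X = Y"
proof (rule ccontr)
  assume "X \<noteq> Y"
  define k where "k = connectivity B"
  have Xf: "fragment B X" "card (X <#> B) = card X + k"
    and Yf: "fragment B Y" "card (Y <#> B) = card Y + k"
    using X Y unfolding atom_def kfragment_def k_def by auto
  have same_card: "card X = card Y" using X Y unfolding atom_def by (simp add: le_antisym)
  have Xc: "X \<subseteq> carrier G" "X <#> B \<noteq> carrier G" and Yc: "Y \<subseteq> carrier G"
    using Xf Yf unfolding fragment_def by auto
  have finX: "finite X" and finY: "finite Y" using Xc Yc fin finite_subset by auto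
  have finXB: "finite (X <#> B)" "finite (Y <#> B)"
    using Xc Yc set_mult_closed[OF _ B_carrier] fin finite_subset by metis+
  have "\<not> X \<subseteq> Y" using card_subset_eq[OF finY _ same_card] \<open>X \<noteq> Y\<close> by auto
  then have small_meet: "card (X \<inter> Y) < card X" using finX by (intro psubset_card_mono) auto
  have meet_B: "(X \<inter> Y) <#> B \<subseteq> (X <#> B) \<inter> (Y <#> B)" unfolding set_mult_def by auto
  have join_B: "(X \<union> Y) <#> B = (X <#> B) \<union> (Y <#> B)" unfolding set_mult_def by auto
  text \<open>Submodularity of the boundary: the products of meet and join are controlled by
    the products of X and Y.\<close>
  have sum_XY: "card ((X <#> B) \<union> (Y <#> B)) + card ((X <#> B) \<inter> (Y <#> B))
      = 2 * card X + 2 * k"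
    using card_Un_Int[OF finXB] Xf Yf same_card by auto
  have card_meet_B: "card ((X \<inter> Y) <#> B) \<le> card ((X <#> B) \<inter> (Y <#> B))"
    using meet_B finXB by (intro card_mono) auto
  have "(X \<inter> Y) <#> B \<noteq> carrier G"
    using meet_B Xc(2) set_mult_closed[OF Xc(1) B_carrier] by auto
  then have meet_frag: "fragment B (X \<inter> Y)" using Xc meet unfolding fragment_def by auto
  have low_meet: "card (X \<inter> Y) + k \<le> card ((X \<inter> Y) <#> B)"
    using connectivity_le[OF meet_frag] unfolding k_def .
  show False
  proof (cases "(X \<union> Y) <#> B = carrier G")
    case True
    text \<open>The join fills the group; this contradicts the size bound for atoms.\<close>
    have "card X + (card X + k) \<le> card (carrier G)" using atom_card_le[OF X] Xf by simp
    moreover have "card (X \<inter> Y) \<ge> 1" using finX meet by (simp add: Suc_le_eq card_gt_0_iff)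
    ultimately show False using True join_B sum_XY card_meet_B low_meet by auto
  next
    case False
    text \<open>Otherwise the meet is a smaller k-fragment, contradicting minimality of X.\<close>
    then have "fragment B (X \<union> Y)" using Xc Yc meet_frag unfolding fragment_def by auto
    then have "card (X \<union> Y) + k \<le> card ((X \<union> Y) <#> B)"
      using connectivity_le unfolding k_def by blast
    moreover have "card (X \<inter> Y) + card (X \<union> Y) = 2 * card X"
      using card_Un_Int[OF finX finY] same_card by auto
    ultimately have "card ((X \<inter> Y) <#> B) = card (X \<inter> Y) + k"
      using sum_XY card_meet_B join_B low_meet by auto
    then have "kfragment B (X \<inter> Y)" using meet_frag unfolding kfragment_def k_def by auto
    then have "card X \<le> card (X \<inter> Y)" using X unfolding atom_def by auto
    then show False using small_meet by simp
  qed
qed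

lemma atom_subgroup:
  assumes H: "atom B H" and one_H: "\<one> \<in> H"
  shows "subgroup H G"
proof -
  have Hc: "H \<subseteq> carrier G" using H unfolding atom_def kfragment_def fragment_def by auto
  text \<open>Translating H by the inverse of any of its elements yields an atom through the
    identity, hence H itself.\<close>
  have shift: "H #> inv x = H" if "x \<in> H" for x
  proof -
    have "\<one> \<in> H #> inv x" using that Hc unfolding r_coset_def by force
    then show ?thesis
      using atom_eq_if_meet[OF atom_rcoset[OF H] H] one_H that Hc by blast
  qed
  have inv_H: "inv x \<in> H" if "x \<in> H" for x
    using shift[OF that] one_H that Hc unfolding r_coset_def by force
  show ?thesis
  proof (rule subgroupI)
    show "H \<subseteq> carrier G" "H \<noteq> {}" using Hc one_H by auto
    show "inv x \<in> H" if "x \<in> H" for x using inv_H that .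
    show "x \<otimes> y \<in> H" if "x \<in> H" "y \<in> H" for x y
    proof -
      have "x \<otimes> inv (inv y) \<in> H #> inv (inv y)" unfolding r_coset_def using that by auto
      then show ?thesis using shift[OF inv_H[OF that(2)]] that(2) Hc by auto
    qed
  qed
qed

theorem isoperimetric_subgroup:
  assumes "B \<noteq> carrier G"
  obtains H where "subgroup H G" "fragment B H" "card (H <#> B) = card H + connectivity B"
proof -
  obtain X where X: "atom B X" using atom_exists[OF assms] by blast
  then obtain x where x: "x \<in> X" "x \<in> carrier G"
    unfolding atom_def kfragment_def fragment_def by auto
  have "atom B (X #> inv x)" using atom_rcoset[OF X] x by simp
  moreover have "\<one> \<in> X #> inv x" using x unfolding r_coset_def by force
  ultimately have "subgroup (X #> inv x) G" by (rule atom_subgroup)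
  then show ?thesis using that \<open>atom B (X #> inv x)\<close> unfolding atom_def kfragment_def by blast
qed

lemma generating_card_le_boundary:
  assumes H: "subgroup H G" and HB: "H <#> B \<noteq> carrier G"
    and gen: "generate G B = carrier G"
  shows "card B \<le> 2 * (card (H <#> B) - card H)"
    and "card B = 2 * (card (H <#> B) - card H) \<Longrightarrow> \<exists>g\<in>B. g \<notin> H \<and> B = H \<union> (H #> g)"
proof -
  have Hc: "H \<subseteq> carrier G" using subgroup.subset[OF H] .
  have HBc: "H <#> B \<subseteq> carrier G" using set_mult_closed[OF Hc B_carrier] .
  have finHB: "finite (H <#> B)" using finite_subset[OF HBc fin] .
  have H_HB: "H \<subseteq> H <#> B" using subset_set_mult[OF Hc one_B] .
  text \<open>Since B generates G and H B is a proper subset, B is not contained in H.\<close>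
  obtain g where g: "g \<in> B" "g \<notin> H"
  proof (rule ccontr)
    assume "\<not> thesis"
    then have "generate G B \<subseteq> H" using that generate_subgroup_incl[OF _ H] by blast
    then show False using gen H_HB HB HBc by blast
  qed
  have gc: "g \<in> carrier G" using g B_carrier by auto
  have pair_HB: "H \<union> (H #> g) \<subseteq> H <#> B"
    using H_HB g(1) unfolding r_coset_def set_mult_def by blast
  have two_H: "2 * card H \<le> card (H <#> B)"
    using card_mono[OF finHB pair_HB] card_coset_pair[OF fin H gc g(2)] by simp
  have B_HB: "B \<subseteq> H <#> B"
    using subgroup.one_closed[OF H] B_carrier unfolding set_mult_def by force
  have card_B: "card B \<le> card (H <#> B)" using card_mono[OF finHB B_HB] .
  show "card B \<le> 2 * (card (H <#> B) - card H)" using two_H card_B by linarith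
  assume eq: "card B = 2 * (card (H <#> B) - card H)"
  then have "card (H \<union> (H #> g)) = card (H <#> B)" "card B = card (H <#> B)"
    using two_H card_B card_coset_pair[OF fin H gc g(2)] by linarith+
  then have "H \<union> (H #> g) = H <#> B" "B = H <#> B"
    using card_subset_eq[OF finHB] pair_HB B_HB by auto
  then show "\<exists>g\<in>B. g \<notin> H \<and> B = H \<union> (H #> g)" using g by auto
qed

end

end

lemma diam_ge_iff: "enat r \<le> diam G A \<longleftrightarrow> (\<forall>k<r. sumset G A k \<noteq> carrier G)"
proof (cases "\<exists>r. sumset G A r = carrier G")
  case True
  define L where "L = (LEAST r. sumset G A r = carrier G)"
  have L: "sumset G A L = carrier G" unfolding L_def using LeastI_ex[OF True] .
  have L_least: "L \<le> k" if "sumset G A k = carrier G" for k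
    unfolding L_def using that by (rule Least_le)
  have "r \<le> L \<longleftrightarrow> (\<forall>k<r. sumset G A k \<noteq> carrier G)"
  proof
    show "\<forall>k<r. sumset G A k \<noteq> carrier G" if "r \<le> L" using that L_least by fastforce
    show "r \<le> L" if "\<forall>k<r. sumset G A k \<noteq> carrier G" using that L by (cases "L < r") auto
  qed
  moreover have "diam G A = enat L" unfolding diam_def L_def using True by simp
  ultimately show ?thesis by simp
next
  case False
  then show ?thesis unfolding diam_def by simp
qed

context group
begin

lemma sumset_carrier: "A \<subseteq> carrier G \<Longrightarrow> sumset G A n \<subseteq> carrier G"
  by (induction n) (auto simp: set_mult_closed)

lemma sumset_mono:
  assumes A: "A \<subseteq> carrier G" and "i \<le> j"
  shows "sumset G A i \<subseteq> sumset G A j"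
proof (rule lift_Suc_mono_le[of "sumset G A", OF _ \<open>i \<le> j\<close>])
  show "sumset G A n \<subseteq> sumset G A (Suc n)" for n
    using subset_set_mult[OF sumset_carrier[OF A]] by simp
qed

lemma one_sumset: "A \<subseteq> carrier G \<Longrightarrow> \<one> \<in> sumset G A n"
  using sumset_mono[of A 0 n] by auto

lemma sumset_one: "A \<subseteq> carrier G \<Longrightarrow> sumset G A 1 = A \<union> {\<one>}"
  using one_set_mult[of "A \<union> {\<one>}"] by simp

lemma sumset_add:
  assumes A: "A \<subseteq> carrier G" and x: "x \<in> sumset G A i"
  shows "y \<in> sumset G A j \<Longrightarrow> x \<otimes> y \<in> sumset G A (i + j)"
proof (induction j arbitrary: y)
  case 0
  then show ?case using x subsetD[OF sumset_carrier[OF A] x] by simp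
next
  case (Suc j)
  then obtain s b where sb: "s \<in> sumset G A j" "b \<in> A \<union> {\<one>}" "y = s \<otimes> b"
    unfolding sumset.simps set_mult_def by auto
  have "x \<in> carrier G" "s \<in> carrier G" "b \<in> carrier G"
    using sb x A sumset_carrier[OF A] by auto
  then have "x \<otimes> y = (x \<otimes> s) \<otimes> b" using sb(3) by (simp add: m_assoc)
  moreover have "x \<otimes> s \<in> sumset G A (i + j)" using Suc.IH[OF sb(1)] .
  ultimately show ?case using sb(2) unfolding add_Suc_right sumset.simps set_mult_def by blast
qed

lemma sumset_subset_generate: "A \<subseteq> carrier G \<Longrightarrow> sumset G A n \<subseteq> generate G A"
proof (induction n)
  case 0
  then show ?case by (simp add: generate.one)
next
  case (Suc n)
  then show ?case
    unfolding sumset.simps set_mult_def by (auto intro: generate.eng generate.incl generate.one)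
qed

text \<open>In a finite group every generating set eventually covers the group by its sumsets:
  the union of all sumsets is closed under products, and inverses are positive powers.\<close>
lemma sumset_eventually_carrier:
  assumes fin: "finite (carrier G)" and A: "A \<subseteq> carrier G" and gen: "generate G A = carrier G"
  shows "\<exists>k. sumset G A k = carrier G"
proof -
  define U where "U = (\<Union>k. sumset G A k)"
  have U_carrier: "U \<subseteq> carrier G" unfolding U_def using sumset_carrier[OF A] by auto
  have "subgroup U G"
  proof (rule subgroupI)
    show "U \<subseteq> carrier G" by (rule U_carrier)
    show "U \<noteq> {}" using one_sumset[OF A, of 0] unfolding U_def by blast
    show "x \<otimes> y \<in> U" if "x \<in> U" "y \<in> U" for x y
      using that sumset_add[OF A] unfolding U_def by blast
    show "inv x \<in> U" if "x \<in> U" for x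
    proof -
      obtain i where i: "x \<in> sumset G A i" using \<open>x \<in> U\<close> unfolding U_def by blast
      have x: "x \<in> carrier G" using that U_carrier by auto
      have "order G \<noteq> 0" using fin x unfolding order_def by (auto simp: card_0_eq)
      then obtain m where m: "order G = Suc m" using not0_implies_Suc by blast
      have "x [^] m \<otimes> x = \<one>" using pow_order_eq_1[OF x] m by (simp add: nat_pow_Suc)
      then have "inv x = x [^] m" using x by (simp add: inv_equality)
      moreover have "x [^] m \<in> sumset G A (m * i)"
      proof (induction m)
        case (Suc m)
        then show ?case using sumset_add[OF A Suc.IH i] by (metis add.commute mult_Suc nat_pow_Suc)
      qed (simp add: one_sumset[OF A])
      ultimately show ?thesis unfolding U_def by auto
    qed
  qed
  moreover have "A \<subseteq> U" unfolding U_def using sumset_one[OF A] by blast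
  ultimately have all: "\<forall>x\<in>carrier G. \<exists>k. x \<in> sumset G A k"
    using generate_subgroup_incl gen unfolding U_def by blast
  obtain f where f: "\<And>x. x \<in> carrier G \<Longrightarrow> x \<in> sumset G A (f x)" using all by metis
  have "sumset G A (f x) \<subseteq> sumset G A (Max (f ` carrier G))" if "x \<in> carrier G" for x
    using sumset_mono[OF A] fin that by auto
  then have "carrier G \<subseteq> sumset G A (Max (f ` carrier G))" using f by blast
  then show ?thesis using sumset_carrier[OF A] by blast
qed

lemma diam_finite_iff_generate:
  assumes "finite (carrier G)" "A \<subseteq> carrier G"
  shows "diam G A < \<infinity> \<longleftrightarrow> generate G A = carrier G"
proof
  assume "diam G A < \<infinity>"
  then obtain k where "sumset G A k = carrier G" unfolding diam_def by (auto split: if_splits)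
  then show "generate G A = carrier G"
    using sumset_subset_generate[OF assms(2)] generate_incl[OF assms(2)] by blast
qed (use sumset_eventually_carrier[OF assms] in \<open>auto simp: diam_def\<close>)

end

context comm_group
begin

lemma card_sumset_growth:
  assumes fin: "finite (carrier G)" and A: "A \<subseteq> carrier G"
  shows "sumset G A (Suc (Suc j)) \<noteq> carrier G \<Longrightarrow>
    card (A \<union> {\<one>}) + j * connectivity (A \<union> {\<one>}) \<le> card (sumset G A (Suc j))"
proof (induction j)
  case 0
  then show ?case using sumset_one[OF A] by simp
next
  case (Suc j)
  have "sumset G A (Suc (Suc j)) \<subseteq> sumset G A (Suc (Suc (Suc j)))"
    by (rule sumset_mono[OF A]) simp
  then have proper: "sumset G A (Suc (Suc j)) \<noteq> carrier G"
    using Suc.prems sumset_carrier[OF A] by (metis subset_antisym)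
  then have IH: "card (A \<union> {\<one>}) + j * connectivity (A \<union> {\<one>}) \<le> card (sumset G A (Suc j))"
    by (rule Suc.IH)
  have "sumset G A (Suc j) <#> (A \<union> {\<one>}) = sumset G A (Suc (Suc j))" by simp
  then have "fragment (A \<union> {\<one>}) (sumset G A (Suc j))"
    unfolding fragment_def using proper sumset_carrier[OF A] one_sumset[OF A] by blast
  then have "card (sumset G A (Suc j)) + connectivity (A \<union> {\<one>}) \<le> card (sumset G A (Suc (Suc j)))"
    using connectivity_le[OF fin] A by simp
  then show ?case using IH by simp
qed

theorem extremal_bound:
  assumes fin: "finite (carrier G)" and A: "A \<subseteq> carrier G" and gen: "generate G A = carrier G"
    and r: "4 \<le> r" and far: "sumset G A (r - 1) \<noteq> carrier G"
  shows "(r + 1) * card A \<le> 2 * card (carrier G)"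
    and "(r + 1) * card A = 2 * card (carrier G) \<Longrightarrow>
      \<exists>H g. subgroup H G \<and> g \<in> carrier G \<and> g \<notin> H \<and> A = H \<union> (H #> g)"
proof -
  define B where "B = A \<union> {\<one>}"
  define n where "n = card (carrier G)"
  define k where "k = connectivity B"
  define m where "m = r - 3"
  have Bc: "B \<subseteq> carrier G" and one_B: "\<one> \<in> B" using A unfolding B_def by auto
  have r_eq: "r - 1 = Suc (Suc m)" "r - 2 = Suc m" "r + 1 = m + 4" and "0 < m"
    using r unfolding m_def by auto
  have "B \<subseteq> sumset G A (r - 1)" using sumset_mono[OF A, of 1 "r - 1"] sumset_one[OF A] r
    unfolding B_def by auto
  then have B_proper: "B \<noteq> carrier G" using far sumset_carrier[OF A] by blast
  obtain H where H: "subgroup H G" "fragment B H" "card (H <#> B) = card H + k"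
    using isoperimetric_subgroup[OF fin Bc one_B B_proper] unfolding k_def by blast
  have HB: "H <#> B \<noteq> carrier G" using H(2) unfolding fragment_def by blast
  have genB: "generate G B = carrier G"
    using mono_generate[of A B] generate_incl[OF Bc] gen unfolding B_def by auto
  note boundary = generating_card_le_boundary[OF fin Bc one_B H(1) HB genB]
  have B_le: "card B \<le> 2 * k" using boundary(1) H(3) by simp
  text \<open>The sumsets grow by at least k per step, and the last proper sumset leaves room for
    a translate of B in its complement.\<close>
  have growth: "card B + m * k \<le> card (sumset G A (r - 2))"
    using card_sumset_growth[OF fin A, of m] far r_eq unfolding B_def k_def by simp
  have "sumset G A (r - 2) <#> B \<noteq> carrier G" using far r_eq unfolding B_def by simp
  then have room: "card (sumset G A (r - 2)) + card B \<le> n"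
    using card_add_le_if_set_mult_proper[OF fin sumset_carrier[OF A] Bc] unfolding n_def by blast
  have main: "4 * card B + m * (2 * k) \<le> 2 * n" using growth room by linarith
  have split: "(r + 1) * card B = 4 * card B + m * card B" using r_eq(3) by (simp add: algebra_simps)
  have "m * card B \<le> m * (2 * k)" using B_le by simp
  then have bound_B: "(r + 1) * card B \<le> 2 * n" using main split by linarith
  have finB: "finite B" using finite_subset[OF Bc fin] .
  have A_le: "card A \<le> card B" using card_mono[OF finB] unfolding B_def by auto
  then show "(r + 1) * card A \<le> 2 * card (carrier G)"
    using bound_B mult_le_mono2[OF A_le, of "r + 1"] unfolding n_def by linarith
  assume eq: "(r + 1) * card A = 2 * card (carrier G)"
  then have "(r + 1) * card B \<le> (r + 1) * card A" using bound_B unfolding n_def by linarith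
  then have "card B \<le> card A" using mult_le_cancel1[of "r + 1" "card B" "card A"] by simp
  then have A_eq: "A = B" using card_subset_eq[OF finB] A_le unfolding B_def by auto
  have "m * (2 * k) \<le> m * card B" using main eq split unfolding A_eq n_def by linarith
  then have "card B = 2 * k" using B_le \<open>0 < m\<close> by simp
  then show "\<exists>H g. subgroup H G \<and> g \<in> carrier G \<and> g \<notin> H \<and> A = H \<union> (H #> g)"
    using boundary(2) H(1,3) A_eq Bc unfolding k_def by auto
qed

end

lemma (in group) cyclic_group_iff_generate:
  "cyclic_group G \<longleftrightarrow> (\<exists>x\<in>carrier G. generate G {x} = carrier G)"
proof -
  have "subgroup_generated G {x} = G \<longleftrightarrow> generate G {x} = carrier G" if "x \<in> carrier G" for x
  proof
    assume "subgroup_generated G {x} = G"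
    then show "generate G {x} = carrier G"
      using carrier_subgroup_generated[of G "{x}"] that by (metis Int_absorb1 empty_subsetI insert_subset)
  next
    assume "generate G {x} = carrier G"
    then show "subgroup_generated G {x} = G"
      using that unfolding subgroup_generated_def by (simp add: Int_absorb1)
  qed
  then show ?thesis unfolding cyclic_group_def by blast
qed

lemma (in group) generate_insert_one:
  assumes "S \<subseteq> carrier G"
  shows "generate G (insert \<one> S) = generate G S"
proof
  show "generate G (insert \<one> S) \<subseteq> generate G S"
    using generate_subgroup_incl[OF _ generate_is_subgroup[OF assms]]
      generate.one generate.incl[of _ S G] by blast
  show "generate G S \<subseteq> generate G (insert \<one> S)" by (rule mono_generate) blast
qed

context comm_group
begin

lemma order_Mod_mult:
  assumes "subgroup H G"
  shows "order (G Mod H) * card H = card (carrier G)"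
  using lagrange[OF assms] unfolding order_def FactGroup_def by simp

lemma Mod_hom:
  assumes "subgroup H G"
  shows "group_hom G (G Mod H) (\<lambda>a. H #> a)"
  using normal.factorgroup_is_group normal.r_coset_hom_Mod subgroup_imp_normal[OF assms]
  by (intro group_hom.intro group_hom_axioms.intro is_group) auto

lemma generate_coset_pair_iff:
  assumes H: "subgroup H G" and g: "g \<in> carrier G"
  shows "generate (G Mod H) {H #> g} = carrier (G Mod H) \<longleftrightarrow>
    generate G (H \<union> (H #> g)) = carrier G"
proof -
  define f where "f = (\<lambda>a. H #> a)"
  define A where "A = H \<union> (H #> g)"
  have Hc: "H \<subseteq> carrier G" using subgroup.subset[OF H] .
  have Ac: "A \<subseteq> carrier G" unfolding A_def using Hc r_coset_subset_G[OF Hc g] by auto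
  have hom: "group_hom G (G Mod H) f" unfolding f_def using Mod_hom[OF H] .
  have "f ` A = {H, H #> g}"
  proof -
    have "f h = H" if "h \<in> H" for h using subgroup.rcos_const[OF H is_group that] f_def by simp
    then have "f ` H = {H}" using subgroup.one_closed[OF H] by blast
    moreover have "f y = f g" if "y \<in> H #> g" for y using repr_independence[OF that g H] f_def by simp
    then have "f ` (H #> g) = {H #> g}" using rcos_self[OF g H] f_def by blast
    ultimately show ?thesis unfolding A_def image_Un by (simp add: insert_commute)
  qed
  have grp: "group (G Mod H)" using group_hom.axioms(2)[OF hom] .
  have "H #> g \<in> carrier (G Mod H)" using g unfolding carrier_FactGroup by blast
  then have "generate (G Mod H) {H, H #> g} = generate (G Mod H) {H #> g}"
    using group.generate_insert_one[OF grp, of "{H #> g}"] by simp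
  then have img: "generate (G Mod H) {H #> g} = f ` generate G A"
    using group_hom.generate_img[OF hom Ac] \<open>f ` A = {H, H #> g}\<close> by simp
  have "carrier G \<subseteq> generate G A" if onto: "f ` generate G A = f ` carrier G"
  proof
    fix x assume x: "x \<in> carrier G"
    then obtain y where y: "y \<in> generate G A" "H #> x = H #> y"
      using onto unfolding f_def by (metis imageE imageI)
    then have "x \<in> H #> y" using rcos_self[OF x H] by simp
    then obtain h where "h \<in> H" "x = h \<otimes> y" unfolding r_coset_def by blast
    then show "x \<in> generate G A"
      using generate.eng[OF generate.incl y(1)] unfolding A_def by auto
  qed
  moreover have "carrier (G Mod H) = f ` carrier G" unfolding f_def by (rule carrier_FactGroup)
  ultimately show ?thesis
    using img generate_incl[OF Ac] unfolding A_def[symmetric] by (metis subset_antisym)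
qed

lemma sumset_coset_pair:
  assumes H: "subgroup H G" and g: "g \<in> carrier G"
  shows "sumset G (H \<union> (H #> g)) k \<subseteq> (\<Union>j\<le>k. H #> (g [^] j))"
proof (induction k)
  case 0
  show ?case using rcos_self[OF one_closed H] by simp
next
  case (Suc k)
  have Hc: "H \<subseteq> carrier G" using subgroup.subset[OF H] .
  show ?case
  proof
    fix x assume "x \<in> sumset G (H \<union> (H #> g)) (Suc k)"
    then obtain s a where sa: "s \<in> sumset G (H \<union> (H #> g)) k"
      "a \<in> H \<union> (H #> g) \<union> {\<one>}" "x = s \<otimes> a"
      unfolding sumset.simps set_mult_def by auto
    from sa(1) Suc obtain j h where jh: "j \<le> k" "h \<in> H" "s = h \<otimes> g [^] j"
      unfolding r_coset_def by blast
    have h: "h \<in> carrier G" using jh Hc by auto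
    have mem: "y \<otimes> g [^] i \<in> (\<Union>j\<le>Suc k. H #> (g [^] j))" if "y \<in> H" "i \<le> Suc k" for y i
      using that unfolding r_coset_def by blast
    consider "a \<in> H \<union> {\<one>}" | h' where "h' \<in> H" "a = h' \<otimes> g"
      using sa(2) unfolding r_coset_def by blast
    then show "x \<in> (\<Union>j\<le>Suc k. H #> (g [^] j))"
    proof cases
      case 1
      then have "h \<otimes> a \<in> H" "a \<in> carrier G" using jh(2) H Hc by (auto intro: subgroup.m_closed)
      moreover have "x = (h \<otimes> a) \<otimes> g [^] j" using sa(3) jh(3) h g \<open>a \<in> carrier G\<close> by (simp add: m_ac)
      ultimately show ?thesis using mem[of "h \<otimes> a" j] jh(1) by simp
    next
      case 2
      then have "h \<otimes> h' \<in> H" "h' \<in> carrier G" using jh(2) H Hc by (auto intro: subgroup.m_closed)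
      moreover have "x = (h \<otimes> h') \<otimes> g [^] Suc j"
        using sa(3) jh(3) h g \<open>h' \<in> carrier G\<close> 2 by (simp add: m_ac nat_pow_Suc)
      ultimately show ?thesis using mem[of "h \<otimes> h'" "Suc j"] jh(1) by simp
    qed
  qed
qed

lemma card_sumset_coset_pair:
  assumes fin: "finite (carrier G)" and H: "subgroup H G" and g: "g \<in> carrier G"
  shows "card (sumset G (H \<union> (H #> g)) k) \<le> Suc k * card H"
proof -
  have Hc: "H \<subseteq> carrier G" using subgroup.subset[OF H] .
  have "finite (H #> (g [^] j))" for j :: nat
    using finite_subset[OF r_coset_subset_G[OF Hc nat_pow_closed[OF g]] fin] .
  then have "card (sumset G (H \<union> (H #> g)) k) \<le> card (\<Union>j\<le>k. H #> (g [^] j))"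
    by (intro card_mono sumset_coset_pair[OF H g]) auto
  also have "\<dots> \<le> (\<Sum>j\<le>k. card (H #> (g [^] j)))" by (rule card_UN_le) simp
  also have "\<dots> = Suc k * card H" using card_rcoset[OF Hc] g by simp
  finally show ?thesis .
qed

lemma coset_pair_extremal:
  assumes fin: "finite (carrier G)" and H: "subgroup H G" and ord: "order (G Mod H) = r + 1"
    and r: "1 \<le> r" and g: "g \<in> carrier G"
    and gen_Q: "generate (G Mod H) {H #> g} = carrier (G Mod H)"
  shows "generate G (H \<union> (H #> g)) = carrier G"
    and "enat r \<le> diam G (H \<union> (H #> g))"
    and "(r + 1) * card (H \<union> (H #> g)) = 2 * card (carrier G)"
proof -
  have Hc: "H \<subseteq> carrier G" using subgroup.subset[OF H] .
  have n: "card (carrier G) = (r + 1) * card H" using order_Mod_mult[OF H] ord by simp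
  have "0 < card H" using subgroup.one_closed[OF H] finite_subset[OF Hc fin] card_gt_0_iff by blast
  have "g \<notin> H"
  proof
    assume "g \<in> H"
    then have "H #> g = \<one>\<^bsub>G Mod H\<^esub>" using subgroup.rcos_const[OF H is_group] by simp
    then have "carrier (G Mod H) = {\<one>\<^bsub>G Mod H\<^esub>}"
      using gen_Q group.generate_one[OF group_hom.axioms(2)[OF Mod_hom[OF H]]] by simp
    then show False using ord r unfolding order_def by simp
  qed
  then have card_pair: "card (H \<union> (H #> g)) = 2 * card H" using card_coset_pair[OF fin H g] by blast
  show "generate G (H \<union> (H #> g)) = carrier G" using generate_coset_pair_iff[OF H g] gen_Q by blast
  show "(r + 1) * card (H \<union> (H #> g)) = 2 * card (carrier G)" using card_pair n by simp
  text \<open>The k-fold sumset meets at most k + 1 cosets of H, so it is proper for k < r.\<close>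
  show "enat r \<le> diam G (H \<union> (H #> g))"
    unfolding diam_ge_iff
  proof (intro allI impI)
    fix k assume "k < r"
    have "card (sumset G (H \<union> (H #> g)) k) \<le> Suc k * card H"
      using card_sumset_coset_pair[OF fin H g] .
    also have "\<dots> < card (carrier G)" using \<open>k < r\<close> \<open>0 < card H\<close> n by simp
    finally show "sumset G (H \<union> (H #> g)) k \<noteq> carrier G" by auto
  qed
qed

theorem extremal_set_iff:
  assumes fin: "finite (carrier G)" and r: "4 \<le> r" and A: "A \<subseteq> carrier G"
  shows "(generate G A = carrier G \<and> enat r \<le> diam G A \<and> (r + 1) * card A = 2 * card (carrier G))
    \<longleftrightarrow> (\<exists>H g. subgroup H G \<and> cyclic_group (G Mod H) \<and> order (G Mod H) = r + 1
          \<and> g \<in> carrier G \<and> generate (G Mod H) {H #> g} = carrier (G Mod H)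
          \<and> A = H \<union> (H #> g))"
proof
  assume lhs: "generate G A = carrier G \<and> enat r \<le> diam G A \<and> (r + 1) * card A = 2 * card (carrier G)"
  then have "sumset G A (r - 1) \<noteq> carrier G" using r unfolding diam_ge_iff by simp
  then obtain H g where Hg: "subgroup H G" "g \<in> carrier G" "g \<notin> H" "A = H \<union> (H #> g)"
    using extremal_bound(2)[OF fin A] lhs r by blast
  have "order (G Mod H) * card H = (r + 1) * card H"
    using order_Mod_mult[OF Hg(1)] lhs card_coset_pair[OF fin Hg(1-3)] Hg(4) by simp
  moreover have "0 < card H"
    using subgroup.one_closed[OF Hg(1)] finite_subset[OF subgroup.subset[OF Hg(1)] fin]
      card_gt_0_iff by blast
  ultimately have ord: "order (G Mod H) = r + 1" by (simp only: mult_cancel2) simp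
  have gen_Q: "generate (G Mod H) {H #> g} = carrier (G Mod H)"
    using generate_coset_pair_iff[OF Hg(1,2)] lhs Hg(4) by blast
  have "H #> g \<in> carrier (G Mod H)" using Hg(2) unfolding carrier_FactGroup by blast
  then have "cyclic_group (G Mod H)"
    using group.cyclic_group_iff_generate[OF group_hom.axioms(2)[OF Mod_hom[OF Hg(1)]]] gen_Q
    by blast
  then show "\<exists>H g. subgroup H G \<and> cyclic_group (G Mod H) \<and> order (G Mod H) = r + 1
      \<and> g \<in> carrier G \<and> generate (G Mod H) {H #> g} = carrier (G Mod H) \<and> A = H \<union> (H #> g)"
    using Hg ord gen_Q by blast
next
  assume "\<exists>H g. subgroup H G \<and> cyclic_group (G Mod H) \<and> order (G Mod H) = r + 1
      \<and> g \<in> carrier G \<and> generate (G Mod H) {H #> g} = carrier (G Mod H) \<and> A = H \<union> (H #> g)"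
  then obtain H g where "subgroup H G" "order (G Mod H) = r + 1" "g \<in> carrier G"
    "generate (G Mod H) {H #> g} = carrier (G Mod H)" "A = H \<union> (H #> g)" by blast
  then show "generate G A = carrier G \<and> enat r \<le> diam G A \<and> (r + 1) * card A = 2 * card (carrier G)"
    using coset_pair_extremal[OF fin, of H r g] r by simp
qed

theorem s_rho_bound:
  assumes fin: "finite (carrier G)" and r: "4 \<le> r"
  shows "(r + 1) * s_rho G r \<le> 2 * card (carrier G)"
    and "(r + 1) * s_rho G r = 2 * card (carrier G) \<longleftrightarrow>
      (\<exists>H. subgroup H G \<and> cyclic_group (G Mod H) \<and> order (G Mod H) = r + 1)"
proof -
  define S where "S = {card A | A. A \<subseteq> carrier G \<and> enat r \<le> diam G A \<and> diam G A < \<infinity>}"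
  have s: "s_rho G r = Max (S \<union> {0})" unfolding s_rho_def S_def by simp
  have "S \<subseteq> card ` Pow (carrier G)" unfolding S_def by blast
  then have finS: "finite (S \<union> {0})" using fin by (simp add: finite_subset)
  have s_in: "s_rho G r \<in> S \<union> {0}" unfolding s using finS by (intro Max_in) auto
  have s_ge: "x \<le> s_rho G r" if "x \<in> S" for x unfolding s using finS that by simp
  have member_bound: "(r + 1) * x \<le> 2 * card (carrier G)" if x: "x \<in> S" for x
  proof -
    obtain A where A: "x = card A" "A \<subseteq> carrier G" "enat r \<le> diam G A" "diam G A < \<infinity>"
      using x unfolding S_def by blast
    have "sumset G A (r - 1) \<noteq> carrier G" using A(3) r unfolding diam_ge_iff by simp
    then show ?thesis
      using extremal_bound(1)[OF fin A(2)] diam_finite_iff_generate[OF fin A(2)] A r by blast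
  qed
  show bound: "(r + 1) * s_rho G r \<le> 2 * card (carrier G)" using s_in member_bound by auto
  have "0 < card (carrier G)" using fin card_gt_0_iff by blast
  show "(r + 1) * s_rho G r = 2 * card (carrier G) \<longleftrightarrow>
      (\<exists>H. subgroup H G \<and> cyclic_group (G Mod H) \<and> order (G Mod H) = r + 1)"
  proof
    assume eq: "(r + 1) * s_rho G r = 2 * card (carrier G)"
    then have "s_rho G r \<in> S" using s_in \<open>0 < card (carrier G)\<close> by auto
    then obtain A where A: "s_rho G r = card A" "A \<subseteq> carrier G" "enat r \<le> diam G A"
      "diam G A < \<infinity>" unfolding S_def by blast
    then show "\<exists>H. subgroup H G \<and> cyclic_group (G Mod H) \<and> order (G Mod H) = r + 1"
      using extremal_set_iff[OF fin r A(2)] diam_finite_iff_generate[OF fin A(2)] eq by auto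
  next
    assume "\<exists>H. subgroup H G \<and> cyclic_group (G Mod H) \<and> order (G Mod H) = r + 1"
    then obtain H where H: "subgroup H G" "cyclic_group (G Mod H)" "order (G Mod H) = r + 1"
      by blast
    obtain x where "x \<in> carrier (G Mod H)" "generate (G Mod H) {x} = carrier (G Mod H)"
      using H(2) group.cyclic_group_iff_generate[OF group_hom.axioms(2)[OF Mod_hom[OF H(1)]]]
      by blast
    then obtain g where g: "g \<in> carrier G" "generate (G Mod H) {H #> g} = carrier (G Mod H)"
      unfolding carrier_FactGroup by blast
    define A where "A = H \<union> (H #> g)"
    note pair = coset_pair_extremal[OF fin H(1,3) _ g, folded A_def]
    have "A \<subseteq> carrier G"
      unfolding A_def using subgroup.subset[OF H(1)] r_coset_subset_G[OF _ g(1)] by blast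
    then have "card A \<in> S"
      using pair diam_finite_iff_generate[OF fin] r unfolding S_def by auto
    then have "(r + 1) * card A \<le> (r + 1) * s_rho G r" using s_ge mult_le_mono2 by blast
    then show "(r + 1) * s_rho G r = 2 * card (carrier G)" using pair(3) r bound by simp
  qed
qed

end

lemma ratio_bound_iff:
  fixes a r n :: nat
  shows "real a \<le> 2 / (real r + 1) * real n \<longleftrightarrow> (r + 1) * a \<le> 2 * n"
    and "real a = 2 / (real r + 1) * real n \<longleftrightarrow> (r + 1) * a = 2 * n"
proof -
  have "real a \<le> 2 / (real r + 1) * real n \<longleftrightarrow> real ((r + 1) * a) \<le> real (2 * n)"
    by (simp add: field_simps)
  then show "real a \<le> 2 / (real r + 1) * real n \<longleftrightarrow> (r + 1) * a \<le> 2 * n" by linarith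
  have "real a = 2 / (real r + 1) * real n \<longleftrightarrow> real ((r + 1) * a) = real (2 * n)"
    by (simp add: field_simps)
  then show "real a = 2 / (real r + 1) * real n \<longleftrightarrow> (r + 1) * a = 2 * n" by linarith
qed

theorem theorem2p9:
  fixes G :: "('a, 'b) monoid_scheme" and r :: nat
  assumes "comm_group G" and "finite (carrier G)" and "r \<ge> 4"
  shows "real (s_rho G r) \<le> 2 / (real r + 1) * real (card (carrier G))
    \<and> (real (s_rho G r) = 2 / (real r + 1) * real (card (carrier G)) \<longleftrightarrow>
         (\<exists>H. subgroup H G \<and> cyclic_group (G Mod H) \<and> order (G Mod H) = r + 1))
    \<and> (\<forall>A. A \<subseteq> carrier G \<longrightarrow>
         ((generate G A = carrier G \<and> enat r \<le> diam G A
            \<and> real (card A) = 2 / (real r + 1) * real (card (carrier G)))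
          \<longleftrightarrow>
          (\<exists>H g. subgroup H G \<and> cyclic_group (G Mod H) \<and> order (G Mod H) = r + 1
              \<and> g \<in> carrier G \<and> generate (G Mod H) {H #>\<^bsub>G\<^esub> g} = carrier (G Mod H)
              \<and> A = H \<union> (H #>\<^bsub>G\<^esub> g))))"
proof -
  interpret comm_group G by fact
  show ?thesis
    unfolding ratio_bound_iff
    using s_rho_bound[OF assms(2,3)] extremal_set_iff[OF assms(2,3)] by blast
qed

end
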